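(* Let $q$ be a prime power and let $\xi$ be a generator of the multiplicative group $\mathbb{F}_q^{*}$. Let $0\le i_1,i_2\le q-2$ be integers such that $i_1=i_2 s$ for some non-negative integer $s$. Let $n$ be a positive integer with $\gcd(n,q)=1$, and let $m=\gcd(n,q-1)$. If $m \mid \gcd(i_2(s-1),\,q-1)$, then the families of $\xi^{i_1}$-constacyclic and $\xi^{i_2}$-constacyclic codes of length $n$ over $\mathbb{F}_q$ are monomially equivalent.
   Context: For $a\in\mathbb{F}_q^*$, a linear code $C\subseteq\mathbb{F}_q^n$ is called $a$-constacyclic if for every codeword $(c_0,c_1,\ldots,c_{n-1})\in C$ we also have $(a c_{n-1},c_0,\ldots,c_{n-2})\in C$; equivalently, $a$-constacyclic codes of length $n$ correspond to ideals of $\mathbb{F}_q[x]/\langle x^n-a\rangle$. An isometry of linear codes is an $\mathbb{F}_q$-linear isomorphism preserving Hamming distance (equivalently, a map given by a monomial matrix). For $a,b\in\mathbb{F}_q^*$, the families of $a$-constacyclic and $b$-constacyclic codes of length $n$ over $\mathbb{F}_q$ are called monomially equivalent if there is a one-to-one correspondence between the set of $a$-constacyclic codes and the set of $b$-constacyclic codes of length $n$ given by an isometry of linear codes (i.e., a single Hamming-distance-preserving $\mathbb{F}_q$-linear isomorphism $\mathbb{F}_q^n\to\mathbb{F}_q^n$ mapping each $a$-constacyclic code onto a $b$-constacyclic code and inducing a bijection between the two families). *)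

theory Defs
  imports Main
begin

text \<open>Words of length n over a field are modelled as functions nat => 'a vanishing
  outside {0..<n}.\<close>

definition words :: "nat \<Rightarrow> (nat \<Rightarrow> 'a::zero) set" where
  "words n = {c. \<forall>i\<ge>n. c i = 0}"

definition hamming_dist :: "nat \<Rightarrow> (nat \<Rightarrow> 'a) \<Rightarrow> (nat \<Rightarrow> 'a) \<Rightarrow> nat" where
  "hamming_dist n x y = card {i. i < n \<and> x i \<noteq> y i}"

definition linear_code :: "nat \<Rightarrow> (nat \<Rightarrow> 'a::field) set \<Rightarrow> bool" where
  "linear_code n C \<longleftrightarrow> C \<subseteq> words n \<and> (\<lambda>i. 0) \<in> C
     \<and> (\<forall>x\<in>C. \<forall>y\<in>C. (\<lambda>i. x i + y i) \<in> C)
     \<and> (\<forall>a. \<forall>x\<in>C. (\<lambda>i. a * x i) \<in> C)"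

definition consta_shift :: "nat \<Rightarrow> 'a::field \<Rightarrow> (nat \<Rightarrow> 'a) \<Rightarrow> (nat \<Rightarrow> 'a)" where
  "consta_shift n a c = (\<lambda>i. if i = 0 then a * c (n - 1) else if i < n then c (i - 1) else 0)"

definition constacyclic :: "nat \<Rightarrow> 'a::field \<Rightarrow> (nat \<Rightarrow> 'a) set \<Rightarrow> bool" where
  "constacyclic n a C \<longleftrightarrow> linear_code n C \<and> (\<forall>c\<in>C. consta_shift n a c \<in> C)"

definition isometry :: "nat \<Rightarrow> ((nat \<Rightarrow> 'a::field) \<Rightarrow> (nat \<Rightarrow> 'a)) \<Rightarrow> bool" where
  "isometry n f \<longleftrightarrow> bij_betw f (words n) (words n)
     \<and> (\<forall>x\<in>words n. \<forall>y\<in>words n. f (\<lambda>i. x i + y i) = (\<lambda>i. f x i + f y i))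
     \<and> (\<forall>a. \<forall>x\<in>words n. f (\<lambda>i. a * x i) = (\<lambda>i. a * f x i))
     \<and> (\<forall>x\<in>words n. \<forall>y\<in>words n. hamming_dist n (f x) (f y) = hamming_dist n x y)"

definition monomially_equivalent :: "nat \<Rightarrow> 'a::field \<Rightarrow> 'a \<Rightarrow> bool" where
  "monomially_equivalent n a b \<longleftrightarrow> (\<exists>f. isometry n f \<and>
     bij_betw (\<lambda>C. f ` C) {C. constacyclic n a C} {C. constacyclic n b C})"

end

theory Submission
  imports Defs "HOL-Number_Theory.Cong"
begin

text \<open>The diagonal monomial map \<open>c\<^sub>i \<mapsto> \<mu>\<^sup>i c\<^sub>i\<close> is an isometry which intertwines the
  \<open>\<mu>\<^sup>n b\<close>-constacyclic shift with \<mu> times the \<open>b\<close>-constacyclic shift, so it carries the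
  \<open>\<mu>\<^sup>n b\<close>-constacyclic codes bijectively onto the \<open>b\<close>-constacyclic ones. It therefore suffices
  to write \<open>\<xi>\<^sup>i\<^sup>1 = (\<xi>\<^sup>k)\<^sup>n \<xi>\<^sup>i\<^sup>2\<close>, i.e. to solve \<open>n k \<equiv> i\<^sub>2 (s - 1) (mod q - 1)\<close>, which is possible
  because \<open>gcd(n, q - 1)\<close> divides \<open>i\<^sub>2 (s - 1)\<close>.\<close>

lemma finite_field_power_card_pred:
  fixes x :: "'a::{finite,field}"
  assumes "x \<noteq> 0"
  shows "x ^ (card (UNIV :: 'a set) - 1) = 1"
proof -
  let ?S = "UNIV - {0::'a}"
  have inj: "inj_on ((*) x) ?S"
    using assms by (auto simp: inj_on_def)
  have perm: "(*) x ` ?S = ?S"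
  proof
    show "(*) x ` ?S \<subseteq> ?S"
      using assms by auto
    show "?S \<subseteq> (*) x ` ?S"
    proof
      fix y assume "y \<in> ?S"
      then have "y = x * (inverse x * y)" "inverse x * y \<in> ?S"
        using assms by auto
      then show "y \<in> (*) x ` ?S" by blast
    qed
  qed
  have "prod id ?S = prod id ((*) x ` ?S)"
    using perm by simp
  also have "\<dots> = x ^ card ?S * prod id ?S"
    using prod.reindex[OF inj, of id] by (simp add: prod.distrib)
  finally have "x ^ card ?S = 1"
    by simp
  then show ?thesis
    by (simp add: card_Diff_singleton)
qed

lemma finite_field_power_cong:
  fixes x :: "'a::{finite,field}"
  assumes "x \<noteq> 0" and "[i = j] (mod card (UNIV :: 'a set) - 1)"
  shows "x ^ i = x ^ j"
proof -
  let ?d = "card (UNIV :: 'a set) - 1"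
  have reduce: "x ^ l = x ^ (l mod ?d)" for l
  proof -
    have "x ^ l = x ^ (?d * (l div ?d) + l mod ?d)"
      by simp
    also have "\<dots> = (x ^ ?d) ^ (l div ?d) * x ^ (l mod ?d)"
      by (simp only: power_add power_mult)
    finally show ?thesis
      using finite_field_power_card_pred[OF assms(1)] by simp
  qed
  have "i mod ?d = j mod ?d"
    using assms(2) by (simp add: cong_def)
  then show ?thesis
    by (metis reduce)
qed

lemma cong_solve_dvd_nat_int:
  fixes a d :: nat and r :: int
  assumes "gcd (int a) (int d) dvd r" and "d > 0"
  obtains k :: nat where "[int (a * k) = r] (mod int d)"
proof -
  obtain x where x: "[int a * x = r] (mod int d)"
    using cong_solve_dvd_int[OF assms(1)] by blast
  have "[int a * (x mod int d) = int a * x] (mod int d)"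
    by (simp add: cong_scalar_left)
  moreover have "int (nat (x mod int d)) = x mod int d"
    using assms(2) by simp
  ultimately have "[int (a * nat (x mod int d)) = r] (mod int d)"
    using x by (metis cong_trans of_nat_mult)
  then show ?thesis
    using that by blast
qed

lemma finite_field_power_ratio_is_nth_power:
  fixes x :: "'a::{finite,field}"
  assumes "x \<noteq> 0" and "gcd (int n) (int (card (UNIV :: 'a set)) - 1) dvd int j - int i"
  obtains k where "(x ^ k) ^ n * x ^ i = x ^ j"
proof -
  let ?d = "card (UNIV :: 'a set) - 1"
  have "card {0, 1::'a} \<le> card (UNIV :: 'a set)"
    by (rule card_mono) simp_all
  then have d: "?d > 0"
    by simp
  then have "int (card (UNIV :: 'a set)) - 1 = int ?d"
    by simp
  then obtain k where "[int (n * k) = int j - int i] (mod int ?d)"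
    using cong_solve_dvd_nat_int[OF _ d] assms(2) by metis
  then have "[int (n * k) + int i = int j - int i + int i] (mod int ?d)"
    by (rule cong_add) simp
  then have "[n * k + i = j] (mod ?d)"
    by (simp add: cong_int_iff[symmetric])
  then have "x ^ (n * k + i) = x ^ j"
    by (rule finite_field_power_cong[OF assms(1)])
  then show ?thesis
    using that[of k] by (simp add: power_add power_mult mult.commute)
qed

definition diag_scale :: "'a::field \<Rightarrow> (nat \<Rightarrow> 'a) \<Rightarrow> (nat \<Rightarrow> 'a)" where
  "diag_scale \<mu> c = (\<lambda>i. \<mu> ^ i * c i)"

lemma diag_scale_inverse:
  "(\<mu>::'a::field) \<noteq> 0 \<Longrightarrow> diag_scale (inverse \<mu>) (diag_scale \<mu> c) = c"
  by (auto simp: diag_scale_def fun_eq_iff field_simps)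

lemma diag_scale_words: "c \<in> words n \<Longrightarrow> diag_scale \<mu> c \<in> words n"
  by (simp add: words_def diag_scale_def)

lemma isometry_diag_scale:
  assumes "(\<mu>::'a::field) \<noteq> 0"
  shows "isometry n (diag_scale \<mu>)"
proof -
  have "diag_scale (inverse \<mu>) (diag_scale \<mu> c) = c" "diag_scale \<mu> (diag_scale (inverse \<mu>) c) = c"
    for c
    using diag_scale_inverse[of \<mu> c] diag_scale_inverse[of "inverse \<mu>" c] assms by simp_all
  then have "bij_betw (diag_scale \<mu>) (words n) (words n)"
    by (intro bij_betw_byWitness[where f' = "diag_scale (inverse \<mu>)"]) (auto intro: diag_scale_words)
  then show ?thesis
    using assms by (simp add: isometry_def hamming_dist_def diag_scale_def fun_eq_iff algebra_simps)
qed

lemma linear_code_isometry_image: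
  assumes f: "isometry n f" and C: "linear_code n C"
  shows "linear_code n (f ` C)"
proof -
  have words: "C \<subseteq> words n"
    using C by (simp add: linear_code_def)
  have zero: "(\<lambda>i. 0) \<in> words n"
    by (simp add: words_def)
  have add: "f (\<lambda>i. x i + y i) = (\<lambda>i. f x i + f y i)" if "x \<in> words n" "y \<in> words n" for x y
    using f that by (simp add: isometry_def)
  have smult: "f (\<lambda>i. a * x i) = (\<lambda>i. a * f x i)" if "x \<in> words n" for a x
    using f that by (simp add: isometry_def)
  from smult[OF zero, of 0] have "f (\<lambda>i. 0) = (\<lambda>i. 0)"
    by simp
  then have "(\<lambda>i. 0) \<in> f ` C"
    using C by (metis image_eqI linear_code_def)
  moreover have "f ` C \<subseteq> words n"
    using f words by (auto simp: isometry_def bij_betw_def)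
  moreover have "(\<lambda>i. f x i + f y i) \<in> f ` C" if "x \<in> C" "y \<in> C" for x y
  proof -
    have "(\<lambda>i. x i + y i) \<in> C"
      using C that by (simp add: linear_code_def)
    moreover have "f (\<lambda>i. x i + y i) = (\<lambda>i. f x i + f y i)"
      using add that words by blast
    ultimately show ?thesis
      by (metis imageI)
  qed
  moreover have "(\<lambda>i. a * f x i) \<in> f ` C" if "x \<in> C" for a x
  proof -
    have "(\<lambda>i. a * x i) \<in> C"
      using C that by (simp add: linear_code_def)
    moreover have "f (\<lambda>i. a * x i) = (\<lambda>i. a * f x i)"
      using smult that words by blast
    ultimately show ?thesis
      by (metis imageI)
  qed
  ultimately show ?thesis
    unfolding linear_code_def by (intro conjI allI ballI) auto
qed

lemma diag_scale_consta_shift: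
  assumes "n > 0"
  shows "diag_scale \<mu> (consta_shift n (\<mu> ^ n * b) c) = (\<lambda>i. \<mu> * consta_shift n b (diag_scale \<mu> c) i)"
proof
  fix i
  have "\<mu> ^ n = \<mu> * \<mu> ^ (n - 1)" "i > 0 \<Longrightarrow> \<mu> ^ i = \<mu> * \<mu> ^ (i - 1)"
    using assms by (metis Suc_diff_1 power_Suc)+
  then show "diag_scale \<mu> (consta_shift n (\<mu> ^ n * b) c) i = \<mu> * consta_shift n b (diag_scale \<mu> c) i"
    by (simp add: consta_shift_def diag_scale_def)
qed

lemma constacyclic_diag_scale_image:
  assumes \<mu>: "(\<mu>::'a::field) \<noteq> 0" and n: "n > 0" and C: "constacyclic n (\<mu> ^ n * b) C"
  shows "constacyclic n b (diag_scale \<mu> ` C)"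
proof -
  have lin: "linear_code n C"
    using C by (simp add: constacyclic_def)
  have "consta_shift n b (diag_scale \<mu> c) \<in> diag_scale \<mu> ` C" if "c \<in> C" for c
  proof -
    have "consta_shift n b (diag_scale \<mu> c)
        = diag_scale \<mu> (\<lambda>i. inverse \<mu> * consta_shift n (\<mu> ^ n * b) c i)"
      using diag_scale_consta_shift[OF n, of \<mu> b c] \<mu>
      by (simp add: diag_scale_def fun_eq_iff field_simps)
    moreover have "(\<lambda>i. inverse \<mu> * consta_shift n (\<mu> ^ n * b) c i) \<in> C"
      using C that by (simp add: constacyclic_def linear_code_def)
    ultimately show ?thesis
      by simp
  qed
  then show ?thesis
    using linear_code_isometry_image[OF isometry_diag_scale[OF \<mu>] lin]
    by (simp add: constacyclic_def)
qed

lemma monomially_equivalent_power_mult: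
  assumes \<mu>: "(\<mu>::'a::field) \<noteq> 0" and n: "n > 0"
  shows "monomially_equivalent n (\<mu> ^ n * b) b"
proof -
  have \<mu>': "inverse \<mu> \<noteq> 0"
    using \<mu> by simp
  have cancel: "inverse \<mu> ^ n * (\<mu> ^ n * b) = b"
    using \<mu> by (simp add: field_simps)
  have scale_back: "constacyclic n (\<mu> ^ n * b) (diag_scale (inverse \<mu>) ` C)"
    if "constacyclic n b C" for C
    using constacyclic_diag_scale_image[OF \<mu>' n, of "\<mu> ^ n * b" C] that by (simp only: cancel)
  have "bij_betw ((`) (diag_scale \<mu>)) {C. constacyclic n (\<mu> ^ n * b) C} {C. constacyclic n b C}"
    by (rule bij_betw_byWitness[where f' = "(`) (diag_scale (inverse \<mu>))"])
      (use \<mu> \<mu>' scale_back constacyclic_diag_scale_image[OF \<mu> n] diag_scale_inverse[OF \<mu>]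
        diag_scale_inverse[OF \<mu>'] in \<open>auto simp: image_image\<close>)
  then show ?thesis
    using isometry_diag_scale[OF \<mu>] by (auto simp: monomially_equivalent_def)
qed

theorem theorem3p1:
  fixes \<xi> :: "'a::{finite,field}"
    and i1 i2 s n m :: nat
  assumes gen: "\<forall>x::'a. x \<noteq> 0 \<longrightarrow> (\<exists>k::nat. x = \<xi> ^ k)"
    and i1_le: "i1 \<le> card (UNIV :: 'a set) - 2" and i2_le: "i2 \<le> card (UNIV :: 'a set) - 2"
    and i1_eq: "i1 = i2 * s"
    and n_pos: "n > 0"
    and cop: "gcd n (card (UNIV :: 'a set)) = 1"
    and m_def: "m = gcd n (card (UNIV :: 'a set) - 1)"
    and dvd: "int m dvd gcd (int i2 * (int s - 1)) (int (card (UNIV :: 'a set)) - 1)"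
  shows "monomially_equivalent n (\<xi> ^ i1) (\<xi> ^ i2)"
proof (cases "\<xi> = 0")
  case True
  have "UNIV \<subseteq> {0, 1::'a}"
    using gen True by (auto simp: power_0_left split: if_splits)
  then have "card (UNIV :: 'a set) \<le> card {0, 1::'a}"
    by (rule card_mono[rotated]) simp
  then have "card (UNIV :: 'a set) \<le> 2"
    by simp
  then show ?thesis
    using i1_le i2_le monomially_equivalent_power_mult[of 1 n] n_pos by simp
next
  case False
  have "int (card (UNIV :: 'a set) - 1) = int (card (UNIV :: 'a set)) - 1"
    by (simp add: Suc_le_eq finite_UNIV_card_ge_0)
  then have "int m = gcd (int n) (int (card (UNIV :: 'a set)) - 1)"
    using m_def by (metis gcd_int_int_eq)
  moreover have "int i1 - int i2 = int i2 * (int s - 1)"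
    using i1_eq by (simp add: algebra_simps)
  ultimately have "gcd (int n) (int (card (UNIV :: 'a set)) - 1) dvd int i1 - int i2"
    using dvd by (metis dvd_trans gcd_dvd1)
  then obtain k where "(\<xi> ^ k) ^ n * \<xi> ^ i2 = \<xi> ^ i1"
    by (rule finite_field_power_ratio_is_nth_power[OF False])
  then show ?thesis
    using monomially_equivalent_power_mult[of "\<xi> ^ k" n "\<xi> ^ i2"] False n_pos by simp
qed

end
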